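(* If $G$ is any blowup of $F_3$, then $\chi(G)\le\lceil\frac54\omega(G)\rceil$.
   Context: $F_3$ is the graph on $\{v_1,\dots,v_6,x,y,z\}$ where $v_1\cdots v_6v_1$ is an induced 6-cycle, $x$ is adjacent to $v_1,v_2,v_3$, $y$ to $v_3,v_4,v_5$, $z$ to $v_5,v_6,v_1$, $\{x,y,z\}$ is a triangle, and there are no other edges. A blowup of $H$ is any graph whose vertex set can be partitioned into $|V(H)|$ (not necessarily non-empty) cliques $Q_v$, $v\in V(H)$, with $Q_u$ complete to $Q_v$ if $uv\in E(H)$ and no edges between $Q_u$ and $Q_v$ if $uv\notin E(H)$. *)

theory Defs
  imports Complex_Main
begin

(* A (finite simple) graph is given by a vertex set V and a symmetric,
   irreflexive adjacency relation E (only its restriction to V matters). *)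

definition simple_graph :: "'a set \<Rightarrow> ('a \<Rightarrow> 'a \<Rightarrow> bool) \<Rightarrow> bool" where
  "simple_graph V E \<longleftrightarrow> finite V \<and> (\<forall>x\<in>V. \<forall>y\<in>V. E x y \<longrightarrow> E y x) \<and> (\<forall>x\<in>V. \<not> E x x)"

definition is_clique :: "'a set \<Rightarrow> ('a \<Rightarrow> 'a \<Rightarrow> bool) \<Rightarrow> 'a set \<Rightarrow> bool" where
  "is_clique V E K \<longleftrightarrow> K \<subseteq> V \<and> (\<forall>x\<in>K. \<forall>y\<in>K. x \<noteq> y \<longrightarrow> E x y)"

definition clique_number :: "'a set \<Rightarrow> ('a \<Rightarrow> 'a \<Rightarrow> bool) \<Rightarrow> nat" where
  "clique_number V E = Max {card K | K. is_clique V E K}"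

definition colouring :: "'a set \<Rightarrow> ('a \<Rightarrow> 'a \<Rightarrow> bool) \<Rightarrow> nat \<Rightarrow> ('a \<Rightarrow> nat) \<Rightarrow> bool" where
  "colouring V E k c \<longleftrightarrow> (\<forall>x\<in>V. c x < k) \<and> (\<forall>x\<in>V. \<forall>y\<in>V. E x y \<longrightarrow> c x \<noteq> c y)"

definition chromatic_number :: "'a set \<Rightarrow> ('a \<Rightarrow> 'a \<Rightarrow> bool) \<Rightarrow> nat" where
  "chromatic_number V E = (LEAST k. \<exists>c. colouring V E k c)"

datatype F3v = v1 | v2 | v3 | v4 | v5 | v6 | x | y | z

definition F3_edges :: "(F3v \<times> F3v) set" where
  "F3_edges = {(v1,v2),(v2,v3),(v3,v4),(v4,v5),(v5,v6),(v6,v1),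
               (x,v1),(x,v2),(x,v3),
               (y,v3),(y,v4),(y,v5),
               (z,v5),(z,v6),(z,v1),
               (x,y),(y,z),(z,x)}"

definition F3_adj :: "F3v \<Rightarrow> F3v \<Rightarrow> bool" where
  "F3_adj u w \<longleftrightarrow> (u, w) \<in> F3_edges \<or> (w, u) \<in> F3_edges"

definition is_blowup :: "'a set \<Rightarrow> ('a \<Rightarrow> 'a \<Rightarrow> bool) \<Rightarrow> ('b \<Rightarrow> 'b \<Rightarrow> bool) \<Rightarrow> bool" where
  "is_blowup V E A \<longleftrightarrow> (\<exists>Q :: 'b \<Rightarrow> 'a set.
      (\<Union>h. Q h) = V \<and>
      (\<forall>u w. u \<noteq> w \<longrightarrow> Q u \<inter> Q w = {}) \<and>
      (\<forall>h. is_clique V E (Q h)) \<and>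
      (\<forall>u w a b. u \<noteq> w \<longrightarrow> a \<in> Q u \<longrightarrow> b \<in> Q w \<longrightarrow> (E a b \<longleftrightarrow> A u w)))"

end

theory Submission
  imports Defs
begin

(*
  Let the part of the blowup at h have w h vertices. Every triangle of F_3 blows up to a clique,
  so it has weight at most \<omega>. It suffices to give each h a set of w h colours out of
  k = \<lceil>5\<omega>/4\<rceil> such that adjacent vertices of F_3 get disjoint sets; each part is then
  coloured injectively from its set.

  Give x, y, z disjoint blocks of colours and call the remaining colours free. Each cycle vertex
  reuses colours of the triangle vertices it is not adjacent to (v1 of y, v2 of y and z, v3 of z,
  and so on) and takes the rest from the free block: v1, v3, v5 from its bottom, v2, v4, v6 from
  its top. Consecutive cycle vertices can then only clash when their free demands together exceed
  the free block, and with a suitable split of the blocks of x, y, z this is excluded by the ten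
  triangle inequalities and 5\<omega> \<le> 4k.
*)

lemma clique_card_le_clique_number:
  assumes "finite V" "is_clique V E K"
  shows "card K \<le> clique_number V E"
proof -
  have "{card K |K. is_clique V E K} \<subseteq> {..card V}"
    using assms(1) by (auto simp: is_clique_def intro: card_mono)
  then have "finite {card K |K. is_clique V E K}"
    by (rule finite_subset) simp
  then show ?thesis
    using assms(2) unfolding clique_number_def by (intro Max_ge) auto
qed

lemma chromatic_number_le: "colouring V E k c \<Longrightarrow> chromatic_number V E \<le> k"
  unfolding chromatic_number_def by (intro Least_le) blast

locale blowup =
  fixes V :: "'a set" and E :: "'a \<Rightarrow> 'a \<Rightarrow> bool"
    and A :: "'b \<Rightarrow> 'b \<Rightarrow> bool" and Q :: "'b \<Rightarrow> 'a set"
  assumes parts_cover: "(\<Union>h. Q h) = V"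
    and parts_disjoint: "u \<noteq> w \<Longrightarrow> Q u \<inter> Q w = {}"
    and part_clique: "is_clique V E (Q h)"
    and parts_adjacent_iff: "u \<noteq> w \<Longrightarrow> a \<in> Q u \<Longrightarrow> b \<in> Q w \<Longrightarrow> E a b \<longleftrightarrow> A u w"

lemma is_blowup_iff: "is_blowup V E A \<longleftrightarrow> (\<exists>Q. blowup V E A Q)"
  unfolding is_blowup_def blowup_def by blast

definition weighted_colouring ::
  "('b \<Rightarrow> 'b \<Rightarrow> bool) \<Rightarrow> ('b \<Rightarrow> nat) \<Rightarrow> nat \<Rightarrow> ('b \<Rightarrow> nat set) \<Rightarrow> bool" where
  "weighted_colouring A w k S \<longleftrightarrow>
     (\<forall>h. S h \<subseteq> {..<k} \<and> w h \<le> card (S h)) \<and> (\<forall>u v. A u v \<longrightarrow> S u \<inter> S v = {})"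

context blowup
begin

lemma part_subset: "Q h \<subseteq> V"
  using parts_cover by blast

lemma clique_weight_le_clique_number:
  assumes "finite V" "finite T"
    and T: "\<And>u w. u \<in> T \<Longrightarrow> w \<in> T \<Longrightarrow> u \<noteq> w \<Longrightarrow> A u w"
  shows "(\<Sum>h\<in>T. card (Q h)) \<le> clique_number V E"
proof -
  have "is_clique V E (\<Union>h\<in>T. Q h)"
    unfolding is_clique_def
  proof (intro conjI ballI impI)
    show "(\<Union>h\<in>T. Q h) \<subseteq> V" using part_subset by blast
    fix a b assume "a \<in> (\<Union>h\<in>T. Q h)" "b \<in> (\<Union>h\<in>T. Q h)" "a \<noteq> b"
    then show "E a b"
      using T parts_adjacent_iff part_clique unfolding is_clique_def by (metis UN_E)
  qed
  moreover have "card (\<Union>h\<in>T. Q h) = (\<Sum>h\<in>T. card (Q h))"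
    using assms(1,2) part_subset parts_disjoint
    by (intro card_UN_disjoint) (auto intro: finite_subset)
  ultimately show ?thesis
    using clique_card_le_clique_number[OF \<open>finite V\<close>] by metis
qed

lemma triangle_weight_le_clique_number:
  assumes "finite V" and sym: "\<And>u w. A u w \<Longrightarrow> A w u" and irrefl: "\<And>u. \<not> A u u"
    and tri: "A u v" "A v t" "A u t"
  shows "card (Q u) + card (Q v) + card (Q t) \<le> clique_number V E"
proof -
  have "distinct [u, v, t]" using tri irrefl by auto
  moreover have "A h h'" if "h \<in> {u, v, t}" "h' \<in> {u, v, t}" "h \<noteq> h'" for h h'
    using that tri sym by auto
  ultimately show ?thesis
    using clique_weight_le_clique_number[OF \<open>finite V\<close>, of "{u, v, t}"] by simp
qed

lemma colouring_of_weighted_colouring: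
  assumes G: "simple_graph V E" and "weighted_colouring A (\<lambda>h. card (Q h)) k S"
  shows "\<exists>c. colouring V E k c"
proof -
  have S_below: "S h \<subseteq> {..<k}" and S_card: "card (Q h) \<le> card (S h)"
    and S_disjoint: "A h h' \<Longrightarrow> S h \<inter> S h' = {}" for h h'
    using assms(2) unfolding weighted_colouring_def by blast+
  have "finite V" using G unfolding simple_graph_def by blast
  define g where "g h = (SOME g. g ` Q h \<subseteq> S h \<and> inj_on g (Q h))" for h
  have "\<exists>g. g ` Q h \<subseteq> S h \<and> inj_on g (Q h)" for h
  proof (rule card_le_inj)
    show "finite (Q h)" using \<open>finite V\<close> part_subset by (rule finite_subset[rotated])
    show "finite (S h)" using S_below by (rule finite_subset) simp
  qed (rule S_card)
  then have g_into: "g h ` Q h \<subseteq> S h" and g_inj: "inj_on (g h) (Q h)" for h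
    unfolding g_def by (metis (no_types, lifting) someI_ex)+
  define part where "part v = (SOME h. v \<in> Q h)" for v
  have in_part: "v \<in> Q (part v)" if "v \<in> V" for v
  proof -
    have "\<exists>h. v \<in> Q h" using that parts_cover by blast
    then show ?thesis unfolding part_def by (rule someI_ex)
  qed
  define c where "c v = g (part v) v" for v
  have c_in: "c v \<in> S (part v)" if "v \<in> V" for v
    unfolding c_def using g_into in_part[OF that] by blast
  have "colouring V E k c"
    unfolding colouring_def
  proof (intro conjI ballI impI)
    fix v assume "v \<in> V"
    then show "c v < k" using c_in S_below by blast
  next
    fix v u assume v: "v \<in> V" and u: "u \<in> V" and "E v u"
    show "c v \<noteq> c u"
    proof (cases "part v = part u")
      case True
      have "v \<noteq> u" using G v \<open>E v u\<close> unfolding simple_graph_def by blast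
      then show ?thesis
        using True inj_onD[OF g_inj _ in_part[OF v]] in_part[OF u] unfolding c_def by metis
    next
      case False
      then have "S (part v) \<inter> S (part u) = {}"
        using S_disjoint parts_adjacent_iff[OF False in_part[OF v] in_part[OF u]] \<open>E v u\<close> by blast
      then show ?thesis using c_in[OF v] c_in[OF u] by (metis disjoint_iff)
    qed
  qed
  then show ?thesis by blast
qed

end

lemma F3_adj_sym: "F3_adj u w \<longleftrightarrow> F3_adj w u"
  unfolding F3_adj_def by blast

lemma F3_adj_irrefl: "\<not> F3_adj u u"
  by (cases u) (simp_all add: F3_adj_def F3_edges_def)

(* The even cycle vertices borrow as much of the blocks of x, y, z as possible while v5, v1, v3
   still fit into the rest of that block plus the free colours. *)
lemma F3_colour_budget:
  fixes p q r a1 a2 a3 a4 a5 a6 \<omega> k :: nat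
  assumes "p+q+r \<le> \<omega>" "p+q+a3 \<le> \<omega>" "q+r+a5 \<le> \<omega>" "r+p+a1 \<le> \<omega>"
    "p+a1+a2 \<le> \<omega>" "p+a2+a3 \<le> \<omega>" "q+a3+a4 \<le> \<omega>" "q+a4+a5 \<le> \<omega>" "r+a5+a6 \<le> \<omega>" "r+a6+a1 \<le> \<omega>"
    and "5*\<omega> \<le> 4*k"
  defines "\<alpha> \<equiv> min p (k-(q+r+a5))" and "\<beta> \<equiv> min q (k-(p+r+a1))" and "\<gamma> \<equiv> min r (k-(p+q+a3))"
  shows "(a1-(q-\<beta>)) + (a2-(\<beta>+\<gamma>)) + (p+q+r) \<le> k"
    and "(a2-(\<beta>+\<gamma>)) + (a3-(r-\<gamma>)) + (p+q+r) \<le> k"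
    and "(a3-(r-\<gamma>)) + (a4-(\<alpha>+\<gamma>)) + (p+q+r) \<le> k"
    and "(a4-(\<alpha>+\<gamma>)) + (a5-(p-\<alpha>)) + (p+q+r) \<le> k"
    and "(a5-(p-\<alpha>)) + (a6-(\<alpha>+\<beta>)) + (p+q+r) \<le> k"
    and "(a6-(\<alpha>+\<beta>)) + (a1-(q-\<beta>)) + (p+q+r) \<le> k"
proof -
  have "q+r+a5 \<le> k" "p+r+a1 \<le> k" "p+q+a3 \<le> k" using assms(1-11) by linarith+
  then have \<alpha>: "\<alpha> \<le> p" "\<alpha> + (q+r+a5) \<le> k" "\<alpha> = p \<or> \<alpha> + (q+r+a5) = k"
    and \<beta>: "\<beta> \<le> q" "\<beta> + (p+r+a1) \<le> k" "\<beta> = q \<or> \<beta> + (p+r+a1) = k"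
    and \<gamma>: "\<gamma> \<le> r" "\<gamma> + (p+q+a3) \<le> k" "\<gamma> = r \<or> \<gamma> + (p+q+a3) = k"
    unfolding assms(12-14) by auto
  show "(a1-(q-\<beta>)) + (a2-(\<beta>+\<gamma>)) + (p+q+r) \<le> k" using \<beta> \<gamma> assms(1-11) by arith
  show "(a2-(\<beta>+\<gamma>)) + (a3-(r-\<gamma>)) + (p+q+r) \<le> k" using \<beta> \<gamma> assms(1-11) by arith
  show "(a3-(r-\<gamma>)) + (a4-(\<alpha>+\<gamma>)) + (p+q+r) \<le> k" using \<alpha> \<gamma> assms(1-11) by arith
  show "(a4-(\<alpha>+\<gamma>)) + (a5-(p-\<alpha>)) + (p+q+r) \<le> k" using \<alpha> \<gamma> assms(1-11) by arith
  show "(a5-(p-\<alpha>)) + (a6-(\<alpha>+\<beta>)) + (p+q+r) \<le> k" using \<alpha> \<beta> assms(1-11) by arith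
  show "(a6-(\<alpha>+\<beta>)) + (a1-(q-\<beta>)) + (p+q+r) \<le> k" using \<alpha> \<beta> assms(1-11) by arith
qed

lemma card_Un_atLeastLessThan:
  fixes a b c d :: nat
  assumes "b \<le> c"
  shows "card ({a..<b} \<union> {c..<d}) = (b - a) + (d - c)"
proof -
  have "{a..<b} \<inter> {c..<d} = {}" using assms by auto
  then show ?thesis by (simp add: card_Un_disjoint)
qed

lemma card_Un_Un_atLeastLessThan:
  fixes a b c d e f :: nat
  assumes "b \<le> c" "c \<le> d" "d \<le> e"
  shows "card ({a..<b} \<union> {c..<d} \<union> {e..<f}) = (b - a) + (d - c) + (f - e)"
proof -
  have "({a..<b} \<union> {c..<d}) \<inter> {e..<f} = {}" using assms by auto
  then show ?thesis using assms(1) by (simp add: card_Un_disjoint card_Un_atLeastLessThan)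
qed

(* v4 and v6 share the first \<alpha> colours of x, v2 and v6 the first \<beta> of y, v2 and v4 the first \<gamma>
   of z; v5, v1, v3 take the rest of these blocks. Beyond that, v_i needs b_i free colours. *)
locale F3_budget =
  fixes w :: "F3v \<Rightarrow> nat" and k \<alpha> \<beta> \<gamma> b1 b2 b3 b4 b5 b6 :: nat
  assumes borrowed: "\<alpha> \<le> w x" "\<beta> \<le> w y" "\<gamma> \<le> w z"
    and demand: "w v1 + \<beta> \<le> w y + b1" "w v2 \<le> \<beta> + \<gamma> + b2" "w v3 + \<gamma> \<le> w z + b3"
      "w v4 \<le> \<alpha> + \<gamma> + b4" "w v5 + \<alpha> \<le> w x + b5" "w v6 \<le> \<alpha> + \<beta> + b6"
    and free: "b1 + b2 + (w x + w y + w z) \<le> k" "b2 + b3 + (w x + w y + w z) \<le> k"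
      "b3 + b4 + (w x + w y + w z) \<le> k" "b4 + b5 + (w x + w y + w z) \<le> k"
      "b5 + b6 + (w x + w y + w z) \<le> k" "b6 + b1 + (w x + w y + w z) \<le> k"
begin

abbreviation "p \<equiv> w x"
abbreviation "q \<equiv> w y"
abbreviation "r \<equiv> w z"
abbreviation "s \<equiv> w x + w y + w z"

definition palette :: "F3v \<Rightarrow> nat set" where
  "palette h = (case h of
      x \<Rightarrow> {0..<p}
    | y \<Rightarrow> {p..<p+q}
    | z \<Rightarrow> {p+q..<s}
    | v1 \<Rightarrow> {p+\<beta>..<p+q} \<union> {s..<s+b1}
    | v3 \<Rightarrow> {p+q+\<gamma>..<s} \<union> {s..<s+b3}
    | v5 \<Rightarrow> {\<alpha>..<p} \<union> {s..<s+b5}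
    | v2 \<Rightarrow> {p..<p+\<beta>} \<union> {p+q..<p+q+\<gamma>} \<union> {k-b2..<k}
    | v4 \<Rightarrow> {0..<\<alpha>} \<union> {p+q..<p+q+\<gamma>} \<union> {k-b4..<k}
    | v6 \<Rightarrow> {0..<\<alpha>} \<union> {p..<p+\<beta>} \<union> {k-b6..<k})"

lemma palette_subset: "palette h \<subseteq> {..<k}"
  using borrowed free unfolding palette_def by (cases h) auto

lemma card_palette: "w h \<le> card (palette h)"
proof -
  have "p + q + \<gamma> \<le> k - b2" "p + q + \<gamma> \<le> k - b4" "p + \<beta> \<le> k - b6"
    "b2 \<le> k" "b4 \<le> k" "b6 \<le> k"
    using borrowed free by linarith+
  then show ?thesis using borrowed demand
    by (cases h) (simp_all add: palette_def card_Un_atLeastLessThan card_Un_Un_atLeastLessThan)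
qed

lemma palette_disjoint: "(u, v) \<in> F3_edges \<Longrightarrow> palette u \<inter> palette v = {}"
  using borrowed free unfolding F3_edges_def palette_def by auto

lemma weighted_colouring_palette: "weighted_colouring F3_adj w k palette"
  unfolding weighted_colouring_def
proof (intro conjI allI impI)
  show "palette h \<subseteq> {..<k}" "w h \<le> card (palette h)" for h
    by (rule palette_subset card_palette)+
next
  fix u v assume "F3_adj u v"
  then show "palette u \<inter> palette v = {}"
    unfolding F3_adj_def using palette_disjoint by (metis Int_commute)
qed

end

lemma F3_weighted_colouring:
  fixes w :: "F3v \<Rightarrow> nat" and \<omega> k :: nat
  assumes triangle: "\<And>u v t. F3_adj u v \<Longrightarrow> F3_adj v t \<Longrightarrow> F3_adj u t \<Longrightarrow> w u + w v + w t \<le> \<omega>"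
    and "5 * \<omega> \<le> 4 * k"
  shows "\<exists>S. weighted_colouring F3_adj w k S"
proof -
  define p q r where "p = w x" and "q = w y" and "r = w z"
  have "p+q+r \<le> \<omega>" "p+q+w v3 \<le> \<omega>" "q+r+w v5 \<le> \<omega>" "r+p+w v1 \<le> \<omega>"
    "p+w v1+w v2 \<le> \<omega>" "p+w v2+w v3 \<le> \<omega>" "q+w v3+w v4 \<le> \<omega>" "q+w v4+w v5 \<le> \<omega>"
    "r+w v5+w v6 \<le> \<omega>" "r+w v6+w v1 \<le> \<omega>"
    unfolding p_def q_def r_def by (rule triangle; simp add: F3_adj_def F3_edges_def)+
  note free = F3_colour_budget[OF this assms(2)]
  define \<alpha> \<beta> \<gamma> where "\<alpha> = min p (k-(q+r+w v5))"
    and "\<beta> = min q (k-(p+r+w v1))" and "\<gamma> = min r (k-(p+q+w v3))"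
  have "F3_budget w k \<alpha> \<beta> \<gamma> (w v1 - (q-\<beta>)) (w v2 - (\<beta>+\<gamma>)) (w v3 - (r-\<gamma>))
      (w v4 - (\<alpha>+\<gamma>)) (w v5 - (p-\<alpha>)) (w v6 - (\<alpha>+\<beta>))"
  proof
    show borrowed: "\<alpha> \<le> w x" "\<beta> \<le> w y" "\<gamma> \<le> w z"
      unfolding \<alpha>_def \<beta>_def \<gamma>_def p_def q_def r_def by simp_all
    show "w v1 + \<beta> \<le> w y + (w v1 - (q-\<beta>))" "w v2 \<le> \<beta> + \<gamma> + (w v2 - (\<beta>+\<gamma>))"
      "w v3 + \<gamma> \<le> w z + (w v3 - (r-\<gamma>))" "w v4 \<le> \<alpha> + \<gamma> + (w v4 - (\<alpha>+\<gamma>))"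
      "w v5 + \<alpha> \<le> w x + (w v5 - (p-\<alpha>))" "w v6 \<le> \<alpha> + \<beta> + (w v6 - (\<alpha>+\<beta>))"
      using borrowed unfolding p_def q_def r_def by arith+
  qed (use free in \<open>simp_all add: \<alpha>_def \<beta>_def \<gamma>_def p_def q_def r_def\<close>)
  then show ?thesis using F3_budget.weighted_colouring_palette by blast
qed

lemma five_quarters_div_le_ceiling: "int ((5 * n + 3) div 4) \<le> \<lceil>(5/4::real) * real n\<rceil>"
proof -
  have "real (4 * ((5 * n + 3) div 4)) \<le> real (5 * n + 3)" by linarith
  then show ?thesis by (simp add: le_ceiling_iff)
qed

lemma blowup_F3_chromatic_number_le:
  assumes G: "simple_graph V E" and Q: "blowup V E F3_adj Q"
  shows "chromatic_number V E \<le> (5 * clique_number V E + 3) div 4"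
proof -
  have "finite V" using G unfolding simple_graph_def by blast
  define \<omega> where "\<omega> = clique_number V E"
  define k where "k = (5 * \<omega> + 3) div 4"
  have triangle_weight: "card (Q u) + card (Q v) + card (Q t) \<le> \<omega>"
    if "F3_adj u v" "F3_adj v t" "F3_adj u t" for u v t
    using blowup.triangle_weight_le_clique_number[OF Q \<open>finite V\<close> _ F3_adj_irrefl that] F3_adj_sym
    unfolding \<omega>_def by blast
  have "5 * \<omega> \<le> 4 * k" unfolding k_def by linarith
  then have "\<exists>S. weighted_colouring F3_adj (\<lambda>h. card (Q h)) k S"
    using F3_weighted_colouring[of "\<lambda>h. card (Q h)", OF triangle_weight] by blast
  then have "\<exists>c. colouring V E k c"
    using blowup.colouring_of_weighted_colouring[OF Q G] by blast
  then show ?thesis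
    unfolding k_def \<omega>_def using chromatic_number_le by blast
qed

theorem theorem5p7:
  fixes V :: "'a set" and E :: "'a \<Rightarrow> 'a \<Rightarrow> bool"
  assumes "simple_graph V E"
    and "is_blowup V E F3_adj"
  shows "int (chromatic_number V E) \<le> \<lceil>(5/4::real) * real (clique_number V E)\<rceil>"
proof -
  have "chromatic_number V E \<le> (5 * clique_number V E + 3) div 4"
    using assms blowup_F3_chromatic_number_le unfolding is_blowup_iff by blast
  then show ?thesis
    using five_quarters_div_le_ceiling[of "clique_number V E"] by linarith
qed

end
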